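(* Let $M$ be a lattice surface and let $\varphi\in\mathrm{Aff}(M)$ satisfy $D\varphi=-\mathrm{Id}$. Then every fixed point of $\varphi$ is a periodic point of $M$.
   Context: $\mathrm{Aff}(M)$ is the group of affine automorphisms of the compact translation surface $M$ (homeomorphisms which are affine in charts, possibly orientation reversing), and $D:\mathrm{Aff}(M)\to\mathrm{GL}_2(\mathbb{R})$ maps an affine automorphism to its linear part. $M$ is a lattice surface if $D(\mathrm{Aff}(M))$ (the Veech group) is a lattice in $\mathrm{SL}_2(\mathbb{R})$. A point $p\in M$ is periodic if its $\mathrm{Aff}(M)$-orbit is finite. *)

theory Defs
  imports "HOL-Analysis.Analysis"
begin

text \<open>The surface is the whole (Hausdorff) type 'a.
  Sigma is the finite set of cone points (possibly including marked points
  of cone angle 2 pi), A is a translation atlas of M - Sigma with charts into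
  the complex plane (identified with R^2).\<close>

definition translation_atlas ::
  "'a::topological_space set \<Rightarrow> ('a set \<times> ('a \<Rightarrow> complex)) set \<Rightarrow> bool" where
  "translation_atlas S A \<longleftrightarrow>
     (\<forall>(U,f)\<in>A. open U \<and> U \<inter> S = {} \<and> open (f ` U) \<and>
                 (\<exists>g. homeomorphism U (f ` U) f g)) \<and>
     \<Union>(fst ` A) = UNIV - S \<and>
     (\<forall>(U,f)\<in>A. \<forall>(V,g)\<in>A. \<forall>x\<in>U \<inter> V.
        \<exists>W. open W \<and> x \<in> W \<and> W \<subseteq> U \<inter> V \<and> (\<exists>c. \<forall>y\<in>W. g y = f y + c)) \<and>
     (\<forall>s\<in>S. \<exists>V \<psi> \<psi>' (k::nat) r.
        open V \<and> s \<in> V \<and> V \<inter> S = {s} \<and> k \<ge> 1 \<and> r > 0 \<and>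
        homeomorphism V (ball 0 r) \<psi> \<psi>' \<and> \<psi> s = 0 \<and>
        (\<forall>(U,f)\<in>A. \<forall>x\<in>U \<inter> V.
           \<exists>W. open W \<and> x \<in> W \<and> W \<subseteq> U \<inter> V \<and> (\<exists>c. \<forall>y\<in>W. f y = (\<psi> y) ^ k + c)))"

definition translation_surface ::
  "'a::t2_space set \<Rightarrow> ('a set \<times> ('a \<Rightarrow> complex)) set \<Rightarrow> bool" where
  "translation_surface S A \<longleftrightarrow>
     compact (UNIV :: 'a set) \<and> connected (UNIV :: 'a set) \<and>
     finite S \<and> S \<noteq> {} \<and> translation_atlas S A"

definition mat_app :: "real^2^2 \<Rightarrow> complex \<Rightarrow> complex" where
  "mat_app L z = Complex (L$1$1 * Re z + L$1$2 * Im z) (L$2$1 * Re z + L$2$2 * Im z)"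

definition affine_aut_with ::
  "'a::topological_space set \<Rightarrow> ('a set \<times> ('a \<Rightarrow> complex)) set \<Rightarrow> ('a \<Rightarrow> 'a) \<Rightarrow> real^2^2 \<Rightarrow> bool" where
  "affine_aut_with S A \<phi> L \<longleftrightarrow>
     (\<exists>\<phi>'. homeomorphism UNIV UNIV \<phi> \<phi>') \<and> \<phi> ` S = S \<and> invertible L \<and>
     (\<forall>(U,f)\<in>A. \<forall>(V,g)\<in>A. \<forall>x\<in>U. \<phi> x \<in> V \<longrightarrow>
        (\<exists>W. open W \<and> x \<in> W \<and> W \<subseteq> U \<and> \<phi> ` W \<subseteq> V \<and>
             (\<exists>c. \<forall>y\<in>W. g (\<phi> y) = mat_app L (f y) + c)))"

definition Aff :: "'a::topological_space set \<Rightarrow> ('a set \<times> ('a \<Rightarrow> complex)) set \<Rightarrow> ('a \<Rightarrow> 'a) set" where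
  "Aff S A = {\<phi>. \<exists>L. affine_aut_with S A \<phi> L}"

definition veech_group :: "'a::topological_space set \<Rightarrow> ('a set \<times> ('a \<Rightarrow> complex)) set \<Rightarrow> (real^2^2) set" where
  "veech_group S A = {L. (\<exists>\<phi>. affine_aut_with S A \<phi> L) \<and> det L = 1}"

definition moebius_act :: "real^2^2 \<Rightarrow> complex \<Rightarrow> complex" where
  "moebius_act g z = (of_real (g$1$1) * z + of_real (g$1$2)) / (of_real (g$2$1) * z + of_real (g$2$2))"

definition upper_half_plane :: "complex set" where
  "upper_half_plane = {z. Im z > 0}"

text \<open>A lattice in SL(2,R): a discrete subgroup whose quotient of the hyperbolic
  plane has finite hyperbolic area (equivalently, finite Haar covolume).\<close>
definition is_lattice_SL2 :: "(real^2^2) set \<Rightarrow> bool" where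
  "is_lattice_SL2 \<Gamma> \<longleftrightarrow>
     (\<forall>g\<in>\<Gamma>. det g = 1) \<and> mat 1 \<in> \<Gamma> \<and>
     (\<forall>g\<in>\<Gamma>. \<forall>h\<in>\<Gamma>. g ** h \<in> \<Gamma>) \<and> (\<forall>g\<in>\<Gamma>. matrix_inv g \<in> \<Gamma>) \<and>
     (\<forall>g\<in>\<Gamma>. \<exists>e>0. \<forall>h\<in>\<Gamma>. dist g h < e \<longrightarrow> h = g) \<and>
     (\<exists>F. F \<in> sets lebesgue \<and> F \<subseteq> upper_half_plane \<and>
          (\<Union>g\<in>\<Gamma>. moebius_act g ` F) = upper_half_plane \<and>
          (\<integral>\<^sup>+ z. indicator F z * ennreal (1 / (Im z)\<^sup>2) \<partial>lebesgue) < \<infinity>)"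

definition lattice_surface :: "'a::t2_space set \<Rightarrow> ('a set \<times> ('a \<Rightarrow> complex)) set \<Rightarrow> bool" where
  "lattice_surface S A \<longleftrightarrow> translation_surface S A \<and> is_lattice_SL2 (veech_group S A)"

definition periodic_point :: "'a::topological_space set \<Rightarrow> ('a set \<times> ('a \<Rightarrow> complex)) set \<Rightarrow> 'a \<Rightarrow> bool" where
  "periodic_point S A p \<longleftrightarrow> finite {\<phi> p | \<phi>. \<phi> \<in> Aff S A}"

end

theory Submission
  imports Defs
begin

text \<open>Conjugating \<open>\<phi>\<close> by any \<open>g \<in> Aff(M)\<close> gives an affine automorphism \<open>g \<phi> g\<inverse>\<close>
  with derivative \<open>-Id\<close> that fixes \<open>g p\<close>, so the whole orbit of \<open>p\<close> consists of fixed points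
  of automorphisms with derivative \<open>-Id\<close>. There are only finitely many of those: two of them
  differ by a translation automorphism, which is the identity as soon as it fixes a regular point,
  and near a cone point of angle \<open>2\<pi>k\<close> each of them acts in the coordinate \<open>\<psi>\<^sup>k\<close> as
  \<open>w \<mapsto> -w\<close>, so it sends a given regular point to one of finitely many \<open>k\<close>-th roots. Each
  of them has only finitely many fixed points: these are isolated at regular points, and the same
  local picture shows that near a cone point only the cone point itself can be fixed.\<close>

section \<open>Affine automorphisms\<close>

lemma mat_app_mult: "mat_app (L ** M) z = mat_app L (mat_app M z)"
  by (simp add: mat_app_def matrix_matrix_mult_def sum_2 complex_eq_iff algebra_simps)

lemma mat_app_one [simp]: "mat_app (mat 1) z = z"
  by (simp add: mat_app_def mat_def complex_eq_iff)

lemma mat_app_neg_one [simp]: "mat_app (- mat 1) z = - z"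
  by (simp add: mat_app_def mat_def complex_eq_iff)

lemma mat_app_add: "mat_app L (a + b) = mat_app L a + mat_app L b"
  by (simp add: mat_app_def complex_eq_iff algebra_simps)

lemma mat_app_diff: "mat_app L (a - b) = mat_app L a - mat_app L b"
  by (simp add: mat_app_def complex_eq_iff algebra_simps)

lemma matrix_mul_lneg: "(- A :: 'a::ring_1^'n^'m) ** B = - (A ** B)"
  by (simp add: matrix_matrix_mult_def vec_eq_iff sum_negf)

lemma matrix_mul_rneg: "(A :: 'a::ring_1^'n^'m) ** (- B) = - (A ** B)"
  by (simp add: matrix_matrix_mult_def vec_eq_iff sum_negf)

lemma translation_atlas_chart:
  assumes "translation_atlas S A" "(U,f) \<in> A"
  shows "U \<inter> S = {}" "inj_on f U"
proof -
  have "open U \<and> U \<inter> S = {} \<and> (\<exists>g. homeomorphism U (f ` U) f g)"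
    using assms unfolding translation_atlas_def by (simp add: Ball_def)
  then obtain g where "U \<inter> S = {}" "homeomorphism U (f ` U) f g" by blast
  then show "U \<inter> S = {}" "inj_on f U"
    by (auto intro!: inj_on_inverseI[where g = g] simp: homeomorphism_def)
qed

lemma translation_atlas_cover:
  assumes "translation_atlas S A" "x \<notin> S"
  obtains U f where "(U,f) \<in> A" "x \<in> U"
proof -
  have "x \<in> \<Union>(fst ` A)" using assms unfolding translation_atlas_def by simp
  then show thesis using that by force
qed

lemma affine_aut_withD:
  assumes "affine_aut_with S A \<phi> L"
  shows "\<exists>\<phi>'. homeomorphism UNIV UNIV \<phi> \<phi>'" "\<phi> ` S = S" "invertible L"
  using assms unfolding affine_aut_with_def by simp_all

lemma affine_aut_with_continuous: "affine_aut_with S A \<phi> L \<Longrightarrow> continuous_on UNIV \<phi>"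
  unfolding affine_aut_with_def homeomorphism_def by blast

lemma affine_aut_with_chart:
  assumes "affine_aut_with S A \<phi> L" "(U,f) \<in> A" "(V,g) \<in> A" "x \<in> U" "\<phi> x \<in> V"
  obtains W c where "open W" "x \<in> W" "W \<subseteq> U" "\<phi> ` W \<subseteq> V"
    "\<And>y. y \<in> W \<Longrightarrow> g (\<phi> y) = mat_app L (f y) + c"
proof -
  have "\<exists>W. open W \<and> x \<in> W \<and> W \<subseteq> U \<and> \<phi> ` W \<subseteq> V \<and>
      (\<exists>c. \<forall>y\<in>W. g (\<phi> y) = mat_app L (f y) + c)"
    using assms unfolding affine_aut_with_def by (simp add: Ball_def)
  then show thesis using that by blast
qed

lemma affine_aut_with_regular:
  assumes "affine_aut_with S A \<phi> L" "x \<notin> S"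
  shows "\<phi> x \<notin> S"
proof
  assume "\<phi> x \<in> S"
  obtain \<phi>' where "homeomorphism UNIV UNIV \<phi> \<phi>'" using affine_aut_withD(1)[OF assms(1)] ..
  then have "inj \<phi>" by (metis homeomorphism_apply1 UNIV_I injI)
  with \<open>\<phi> x \<in> S\<close> show False
    using affine_aut_withD(2)[OF assms(1)] assms(2) by (metis inj_image_mem_iff)
qed

lemma closed_fixed_points:
  fixes \<phi> :: "'a::t2_space \<Rightarrow> 'a"
  assumes "affine_aut_with S A \<phi> L"
  shows "closed {x. \<phi> x = x}"
  using closed_Collect_eq[OF affine_aut_with_continuous[OF assms] continuous_on_id] by simp

lemma affine_aut_withI:
  assumes "homeomorphism UNIV UNIV \<phi> \<phi>'" "\<phi> ` S = S" "invertible L"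
    and "\<And>U f V g x. (U,f) \<in> A \<Longrightarrow> (V,g) \<in> A \<Longrightarrow> x \<in> U \<Longrightarrow> \<phi> x \<in> V \<Longrightarrow>
      \<exists>W. open W \<and> x \<in> W \<and> W \<subseteq> U \<and> \<phi> ` W \<subseteq> V \<and> (\<exists>c. \<forall>y\<in>W. g (\<phi> y) = mat_app L (f y) + c)"
  shows "affine_aut_with S A \<phi> L"
  unfolding affine_aut_with_def using assms by (auto simp: Ball_def)

lemma affine_aut_with_comp:
  assumes atlas: "translation_atlas S A"
    and f: "affine_aut_with S A f L" and g: "affine_aut_with S A g M"
  shows "affine_aut_with S A (g \<circ> f) (M ** L)"
proof -
  obtain f' g' where "homeomorphism UNIV UNIV f f'" "homeomorphism UNIV UNIV g g'"
    using affine_aut_withD(1) f g by metis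
  then have homeo: "homeomorphism UNIV UNIV (g \<circ> f) (f' \<circ> g')"
    by (rule homeomorphism_compose)
  have im: "(g \<circ> f) ` S = S"
    unfolding image_comp[symmetric] using affine_aut_withD(2)[OF f] affine_aut_withD(2)[OF g]
    by simp
  have inv: "invertible (M ** L)" using affine_aut_withD(3)[OF f] affine_aut_withD(3)[OF g]
    by (rule invertible_mult[rotated])
  have loc: "\<exists>W. open W \<and> x \<in> W \<and> W \<subseteq> U \<and> (g \<circ> f) ` W \<subseteq> V \<and>
      (\<exists>c. \<forall>y\<in>W. k ((g \<circ> f) y) = mat_app (M ** L) (h y) + c)"
    if U: "(U,h) \<in> A" and V: "(V,k) \<in> A" and x: "x \<in> U" "(g \<circ> f) x \<in> V" for U h V k x
  proof -
    have "f x \<notin> S"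
      using affine_aut_with_regular[OF f] translation_atlas_chart(1)[OF atlas U] x(1) by blast
    then obtain U1 h1 where U1: "(U1,h1) \<in> A" "f x \<in> U1" using translation_atlas_cover[OF atlas]
      by blast
    obtain W1 c1 where W1: "open W1" "x \<in> W1" "W1 \<subseteq> U" "f ` W1 \<subseteq> U1"
      and e1: "\<And>y. y \<in> W1 \<Longrightarrow> h1 (f y) = mat_app L (h y) + c1"
      using affine_aut_with_chart[OF f U U1(1) x(1) U1(2)] by blast
    obtain W2 c2 where W2: "open W2" "f x \<in> W2" "g ` W2 \<subseteq> V"
      and e2: "\<And>y. y \<in> W2 \<Longrightarrow> k (g y) = mat_app M (h1 y) + c2"
      using affine_aut_with_chart[OF g U1(1) V U1(2)] x(2) by (metis comp_apply)
    have "open (W1 \<inter> f -` W2)"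
      using W1(1) open_vimage[OF W2(1) affine_aut_with_continuous[OF f]] by blast
    moreover have "\<forall>y \<in> W1 \<inter> f -` W2. k ((g \<circ> f) y) = mat_app (M ** L) (h y) + (mat_app M c1 + c2)"
      using e1 e2 by (simp add: mat_app_mult mat_app_add)
    ultimately show ?thesis using W1 W2 by (intro exI[of _ "W1 \<inter> f -` W2"]) auto
  qed
  show ?thesis by (rule affine_aut_withI[OF homeo im inv loc])
qed

lemma affine_aut_with_inverse:
  assumes atlas: "translation_atlas S A" and f: "affine_aut_with S A f L"
    and homeo: "homeomorphism UNIV UNIV f f'" and L': "L' ** L = mat 1" "L ** L' = mat 1"
  shows "affine_aut_with S A f' L'"
proof -
  have ff': "\<And>y. f (f' y) = y" and f'f: "\<And>y. f' (f y) = y"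
    using homeo by (auto simp: homeomorphism_def)
  have "f' ` S = f' ` f ` S" using affine_aut_withD(2)[OF f] by simp
  also have "\<dots> = S" by (simp add: image_image f'f)
  finally have im: "f' ` S = S" .
  have inv: "invertible L'" using L' unfolding invertible_def by blast
  have loc: "\<exists>W. open W \<and> x \<in> W \<and> W \<subseteq> U \<and> f' ` W \<subseteq> V \<and>
      (\<exists>c. \<forall>y\<in>W. k (f' y) = mat_app L' (h y) + c)"
    if U: "(U,h) \<in> A" and V: "(V,k) \<in> A" and x: "x \<in> U" "f' x \<in> V" for U h V k x
  proof -
    obtain W1 c where W1: "open W1" "f' x \<in> W1" "W1 \<subseteq> V" "f ` W1 \<subseteq> U"
      and e: "\<And>y. y \<in> W1 \<Longrightarrow> h (f y) = mat_app L (k y) + c"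
      using affine_aut_with_chart[OF f V U x(2)] x(1) ff' by auto
    have "open (f' -` W1)"
      using open_vimage[OF W1(1)] homeo unfolding homeomorphism_def by blast
    moreover have "f' -` W1 \<subseteq> U" using W1(4) ff' by force
    moreover have "k (f' y) = mat_app L' (h y) + (- mat_app L' c)" if "f' y \<in> W1" for y
      using e[OF that] L'(1) by (simp add: ff' mat_app_add flip: mat_app_mult)
    ultimately show ?thesis using W1 by (intro exI[of _ "f' -` W1"]) auto
  qed
  show ?thesis by (rule affine_aut_withI[OF homeomorphism_symD[OF homeo] im inv loc])
qed

lemma affine_aut_with_conj_neg_id:
  assumes atlas: "translation_atlas S A"
    and \<phi>: "affine_aut_with S A \<phi> (- mat 1)" and g: "affine_aut_with S A g L"
  obtains \<eta> where "affine_aut_with S A \<eta> (- mat 1)" "\<And>x. \<eta> (g x) = g (\<phi> x)"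
proof -
  obtain g' where homeo: "homeomorphism UNIV UNIV g g'" using affine_aut_withD(1)[OF g] ..
  obtain L' where L': "L ** L' = mat 1" "L' ** L = mat 1"
    using affine_aut_withD(3)[OF g] unfolding invertible_def by blast
  have g': "affine_aut_with S A g' L'" using affine_aut_with_inverse[OF atlas g homeo L'(2,1)] .
  have "affine_aut_with S A (g \<circ> (\<phi> \<circ> g')) (L ** ((- mat 1) ** L'))"
    by (intro affine_aut_with_comp[OF atlas _ g] affine_aut_with_comp[OF atlas g' \<phi>])
  moreover have "L ** ((- mat 1) ** L') = - mat 1"
    using L'(1) by (simp add: matrix_mul_lneg matrix_mul_rneg matrix_mul_lid)
  moreover have "(g \<circ> (\<phi> \<circ> g')) (g x) = g (\<phi> x)" for x
    using homeo by (simp add: homeomorphism_def)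
  ultimately show thesis using that by simp
qed

section \<open>Charts at cone points\<close>

lemma power_less_iff_less_root:
  fixes x y :: real
  assumes "0 < n" "0 \<le> x"
  shows "x ^ n < y \<longleftrightarrow> x < root n y"
  using real_root_less_iff[OF assms(1), of "x ^ n" y] real_root_power_cancel[OF assms] by simp

lemma power_le_iff_le_root:
  fixes x y :: real
  assumes "0 < n" "0 \<le> x"
  shows "x ^ n \<le> y \<longleftrightarrow> x \<le> root n y"
  using real_root_le_iff[OF assms(1), of "x ^ n" y] real_root_power_cancel[OF assms] by simp

definition cone_chart ::
  "'a::topological_space set \<Rightarrow> ('a set \<times> ('a \<Rightarrow> complex)) set \<Rightarrow> 'a \<Rightarrow> 'a set \<Rightarrow>
    ('a \<Rightarrow> complex) \<Rightarrow> (complex \<Rightarrow> 'a) \<Rightarrow> nat \<Rightarrow> real \<Rightarrow> bool" where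
  "cone_chart S A s V \<psi> \<psi>' k r \<longleftrightarrow>
     open V \<and> s \<in> V \<and> V \<inter> S = {s} \<and> k \<ge> 1 \<and> r > 0 \<and>
     homeomorphism V (ball 0 r) \<psi> \<psi>' \<and> \<psi> s = 0 \<and>
     (\<forall>(U,f)\<in>A. \<forall>x\<in>U \<inter> V.
        \<exists>W. open W \<and> x \<in> W \<and> W \<subseteq> U \<inter> V \<and> (\<exists>c. \<forall>y\<in>W. f y = (\<psi> y) ^ k + c))"

lemma cone_chart_exists:
  assumes "translation_atlas S A" "s \<in> S"
  obtains V \<psi> \<psi>' k r where "cone_chart S A s V \<psi> \<psi>' k r"
proof -
  have "\<forall>s\<in>S. \<exists>V \<psi> \<psi>' k r. cone_chart S A s V \<psi> \<psi>' k r"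
    using assms(1) unfolding translation_atlas_def cone_chart_def by (elim conjE)
  then show thesis using assms(2) that by blast
qed

context
  fixes S A s V \<psi> \<psi>' k r
  assumes chart: "cone_chart S A s V \<psi> \<psi>' k r"
begin

lemma cone_chart_open: "open V"
  and cone_chart_center: "s \<in> V"
  and cone_chart_singular: "V \<inter> S = {s}"
  and cone_chart_order: "k \<ge> 1"
  and cone_chart_radius: "r > 0"
  and cone_chart_homeomorphism: "homeomorphism V (ball 0 r) \<psi> \<psi>'"
  and cone_chart_center_zero: "\<psi> s = 0"
  using chart unfolding cone_chart_def by simp_all

lemma cone_chart_local:
  assumes "(U,f) \<in> A" "x \<in> U" "x \<in> V"
  obtains W c where "open W" "x \<in> W" "W \<subseteq> U \<inter> V" "\<And>y. y \<in> W \<Longrightarrow> f y = \<psi> y ^ k + c"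
proof -
  have "\<exists>W. open W \<and> x \<in> W \<and> W \<subseteq> U \<inter> V \<and> (\<exists>c. \<forall>y\<in>W. f y = \<psi> y ^ k + c)"
    using chart assms unfolding cone_chart_def by (simp add: Ball_def)
  then show thesis using that by blast
qed

lemma cone_chart_maps_to: "x \<in> V \<Longrightarrow> norm (\<psi> x) < r"
  and cone_chart_inverse_maps_to: "norm w < r \<Longrightarrow> \<psi>' w \<in> V"
  and cone_chart_inverse: "x \<in> V \<Longrightarrow> \<psi>' (\<psi> x) = x"
  and cone_chart_inverse': "norm w < r \<Longrightarrow> \<psi> (\<psi>' w) = w"
  and cone_chart_continuous: "continuous_on V \<psi>"
  and cone_chart_continuous': "continuous_on (ball 0 r) \<psi>'"
  using cone_chart_homeomorphism unfolding homeomorphism_def by auto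

lemma cone_chart_inverse_zero: "\<psi>' 0 = s"
  using cone_chart_inverse[OF cone_chart_center] cone_chart_center_zero by simp

lemma cone_chart_vimage_eq:
  assumes "B \<subseteq> ball 0 r"
  shows "{y \<in> V. \<psi> y \<in> B} = \<psi>' ` B"
proof
  show "{y \<in> V. \<psi> y \<in> B} \<subseteq> \<psi>' ` B"
    using cone_chart_inverse by (metis (mono_tags, lifting) image_eqI mem_Collect_eq subsetI)
  show "\<psi>' ` B \<subseteq> {y \<in> V. \<psi> y \<in> B}"
    using assms cone_chart_inverse_maps_to cone_chart_inverse' by auto
qed

lemma cone_chart_disc_eq: "R \<le> r \<Longrightarrow> {y \<in> V. norm (\<psi> y) < R} = \<psi>' ` ball 0 R"
  using cone_chart_vimage_eq[of "ball 0 R"] subset_ball[of R r 0] by simp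

lemma cone_chart_disc_open: "open {y \<in> V. norm (\<psi> y) < R}"
proof -
  have "open (V \<inter> \<psi> -` ball 0 R)"
    by (rule continuous_open_preimage[OF cone_chart_continuous cone_chart_open open_ball])
  moreover have "V \<inter> \<psi> -` ball 0 R = {y \<in> V. norm (\<psi> y) < R}" by auto
  ultimately show ?thesis by simp
qed

lemma cone_chart_power_disc_open: "open {y \<in> V. norm (\<psi> y) ^ k < \<rho>}"
proof -
  have "continuous_on V (\<lambda>y. norm (\<psi> y) ^ k)"
    by (intro continuous_intros cone_chart_continuous)
  then have "open (V \<inter> (\<lambda>y. norm (\<psi> y) ^ k) -` {..<\<rho>})"
    by (rule continuous_open_preimage[OF _ cone_chart_open open_lessThan])
  moreover have "V \<inter> (\<lambda>y. norm (\<psi> y) ^ k) -` {..<\<rho>} = {y \<in> V. norm (\<psi> y) ^ k < \<rho>}" by auto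
  ultimately show ?thesis by simp
qed

lemma cone_chart_disc_connected:
  assumes "R \<le> r"
  shows "connected {y \<in> V. norm (\<psi> y) < R}"
proof -
  have "continuous_on (ball 0 R) \<psi>'"
    by (rule continuous_on_subset[OF cone_chart_continuous']) (use assms in auto)
  then show ?thesis
    unfolding cone_chart_disc_eq[OF assms] by (rule connected_continuous_image) simp
qed

lemma cone_chart_punctured_disc_connected:
  assumes "R \<le> r"
  shows "connected ({y \<in> V. norm (\<psi> y) < R} - {s})"
proof -
  have "continuous_on (ball 0 R - {0}) \<psi>'"
    by (rule continuous_on_subset[OF cone_chart_continuous']) (use assms in auto)
  then have "connected (\<psi>' ` (ball 0 R - {0}))"
    by (rule connected_continuous_image) (simp add: connected_punctured_ball)
  moreover have "ball 0 R - {0} \<subseteq> ball 0 r" using assms by (simp add: subset_eq)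
  then have "\<psi>' ` (ball 0 R - {0}) = {y \<in> V. \<psi> y \<in> ball 0 R - {0}}"
    by (rule cone_chart_vimage_eq[symmetric])
  also have "\<dots> = {y \<in> V. norm (\<psi> y) < R} - {s}"
    using cone_chart_inverse cone_chart_inverse_zero cone_chart_center_zero by force
  ultimately show ?thesis by simp
qed

lemma cone_chart_punctured_connected: "connected (V - {s})"
proof -
  have "{y \<in> V. norm (\<psi> y) < r} = V" using cone_chart_maps_to by auto
  then show ?thesis using cone_chart_punctured_disc_connected[of r] by simp
qed

lemma cone_chart_closed_disc_compact:
  assumes "R < r"
  shows "compact {y \<in> V. norm (\<psi> y) \<le> R}"
proof -
  have "continuous_on (cball 0 R) \<psi>'"
    by (rule continuous_on_subset[OF cone_chart_continuous']) (use assms in auto)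
  moreover have "cball 0 R \<subseteq> ball 0 r" using assms by (simp add: subset_eq)
  then have "{y \<in> V. norm (\<psi> y) \<le> R} = \<psi>' ` cball 0 R"
    using cone_chart_vimage_eq[of "cball 0 R"] by simp
  ultimately show ?thesis by (simp add: compact_continuous_image)
qed

lemma cone_chart_small_disc:
  assumes "open Q" "s \<in> Q"
  obtains \<delta> where "0 < \<delta>" "\<delta> \<le> r" "{y \<in> V. norm (\<psi> y) < \<delta>} \<subseteq> Q"
proof -
  have "open (ball 0 r \<inter> \<psi>' -` Q)"
    by (rule continuous_open_preimage[OF cone_chart_continuous' open_ball assms(1)])
  moreover have "0 \<in> ball 0 r \<inter> \<psi>' -` Q"
    using cone_chart_radius cone_chart_inverse_zero assms(2) by simp
  ultimately obtain e where e: "0 < e" "ball 0 e \<subseteq> ball 0 r \<inter> \<psi>' -` Q"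
    by (meson open_contains_ball)
  have "{y \<in> V. norm (\<psi> y) < min e r} = \<psi>' ` ball 0 (min e r)"
    by (rule cone_chart_disc_eq) simp
  also have "\<dots> \<subseteq> Q" using e(2) by auto
  finally show thesis by (rule that[rotated 2]) (use e(1) cone_chart_radius in auto)
qed

lemma cone_chart_punctured_disc_nonempty:
  assumes "0 < R"
  obtains y where "y \<in> V" "y \<noteq> s" "norm (\<psi> y) < R"
proof -
  define w where "w = complex_of_real (min R r / 2)"
  have w: "norm w < r" "norm w < R" "w \<noteq> 0"
    using assms cone_chart_radius unfolding w_def by auto
  have "\<psi> (\<psi>' w) = w" using cone_chart_inverse'[OF w(1)] .
  then have "\<psi>' w \<noteq> s" using w(3) cone_chart_center_zero by auto
  then show thesis using that cone_chart_inverse_maps_to[OF w(1)] \<open>\<psi> (\<psi>' w) = w\<close> w(2) by simp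
qed

lemma cone_chart_subset:
  assumes "open V'" "s \<in> V'" "V' \<subseteq> V" "0 < r'" "\<psi> ` V' = ball 0 r'"
  shows "cone_chart S A s V' \<psi> \<psi>' k r'"
proof -
  have homeo: "homeomorphism V' (ball 0 r') \<psi> \<psi>'"
    by (rule homeomorphism_of_subsets[OF cone_chart_homeomorphism assms(3) order_refl assms(5)])
  have sing: "V' \<inter> S = {s}" using assms(2,3) cone_chart_singular by blast
  have "\<exists>W. open W \<and> x \<in> W \<and> W \<subseteq> U \<inter> V' \<and> (\<exists>c. \<forall>y\<in>W. f y = \<psi> y ^ k + c)"
    if UA: "(U,f) \<in> A" and x: "x \<in> U" "x \<in> V'" for U f x
  proof -
    have "x \<in> V" using x(2) assms(3) by blast
    obtain W c where W: "open W" "x \<in> W" "W \<subseteq> U \<inter> V" and c: "\<And>y. y \<in> W \<Longrightarrow> f y = \<psi> y ^ k + c"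
      using cone_chart_local[OF UA x(1) \<open>x \<in> V\<close>] by blast
    have "open (W \<inter> V')" using W(1) assms(1) by blast
    moreover have "x \<in> W \<inter> V'" "W \<inter> V' \<subseteq> U \<inter> V'" using W x(2) by auto
    ultimately show ?thesis using c by blast
  qed
  then have loc: "\<forall>(U,f)\<in>A. \<forall>x\<in>U \<inter> V'.
      \<exists>W. open W \<and> x \<in> W \<and> W \<subseteq> U \<inter> V' \<and> (\<exists>c. \<forall>y\<in>W. f y = \<psi> y ^ k + c)"
    by (simp add: Ball_def)
  show ?thesis unfolding cone_chart_def
    by (intro conjI assms(1,2,4) sing cone_chart_order homeo cone_chart_center_zero loc)
qed

lemma cone_chart_restrict:
  assumes "open Q" "s \<in> Q"
  obtains V' r' where "V' \<subseteq> Q" "cone_chart S A s V' \<psi> \<psi>' k r'"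
proof -
  obtain \<delta> where \<delta>: "0 < \<delta>" "\<delta> \<le> r" and sub: "{y \<in> V. norm (\<psi> y) < \<delta>} \<subseteq> Q"
    using cone_chart_small_disc[OF assms] .
  define V' where "V' = {y \<in> V. norm (\<psi> y) < \<delta>}"
  have "\<psi> ` V' = (\<lambda>w. w) ` ball 0 \<delta>"
    unfolding V'_def cone_chart_disc_eq[OF \<delta>(2)] image_image
    by (rule image_cong) (use \<delta>(2) cone_chart_inverse' in auto)
  then have img: "\<psi> ` V' = ball 0 \<delta>" by simp
  have V': "open V'" "s \<in> V'" "V' \<subseteq> V"
    using cone_chart_disc_open cone_chart_center cone_chart_center_zero \<delta>(1) unfolding V'_def
    by auto
  have "cone_chart S A s V' \<psi> \<psi>' k \<delta>" by (rule cone_chart_subset[OF V' \<delta>(1) img])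
  then show thesis using that sub unfolding V'_def by blast
qed

end

section \<open>Fixed points and rigidity\<close>

lemma affine_aut_fixed_point_chart:
  assumes atlas: "translation_atlas S A" and \<phi>: "affine_aut_with S A \<phi> L"
    and a: "a \<notin> S" "\<phi> a = a"
  obtains U f W where "(U,f) \<in> A" "inj_on f U" "open W" "a \<in> W" "W \<subseteq> U" "\<phi> ` W \<subseteq> U"
    "\<And>y. y \<in> W \<Longrightarrow> f (\<phi> y) - f a = mat_app L (f y - f a)"
proof -
  obtain U f where U: "(U,f) \<in> A" "a \<in> U" using translation_atlas_cover[OF atlas a(1)] by blast
  have "\<phi> a \<in> U" using U(2) a(2) by simp
  then obtain W c where W: "open W" "a \<in> W" "W \<subseteq> U" "\<phi> ` W \<subseteq> U"
    and c: "\<And>y. y \<in> W \<Longrightarrow> f (\<phi> y) = mat_app L (f y) + c"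
    using affine_aut_with_chart[OF \<phi> U(1) U(1) U(2)] by metis
  have ca: "mat_app L (f a) + c = f a" using c[OF W(2)] a(2) by simp
  have "f (\<phi> y) - f a = mat_app L (f y - f a)" if "y \<in> W" for y
  proof -
    have "f (\<phi> y) - f a = (mat_app L (f y) + c) - (mat_app L (f a) + c)" using c[OF that] ca by simp
    also have "\<dots> = mat_app L (f y - f a)" by (simp add: mat_app_diff)
    finally show ?thesis .
  qed
  then show thesis by (rule that[OF U(1) translation_atlas_chart(2)[OF atlas U(1)] W])
qed

lemma translation_fixed_point_neighbourhood:
  assumes atlas: "translation_atlas S A" and \<tau>: "affine_aut_with S A \<tau> (mat 1)"
    and a: "a \<notin> S" "\<tau> a = a"
  obtains W where "open W" "a \<in> W" "\<And>y. y \<in> W \<Longrightarrow> \<tau> y = y"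
proof -
  obtain U f W where "(U,f) \<in> A" "inj_on f U" "open W" "a \<in> W" "W \<subseteq> U" "\<tau> ` W \<subseteq> U"
    and eq: "\<And>y. y \<in> W \<Longrightarrow> f (\<tau> y) - f a = mat_app (mat 1) (f y - f a)"
    using affine_aut_fixed_point_chart[OF atlas \<tau> a] by blast
  have "\<tau> y = y" if "y \<in> W" for y
    using eq[OF that] that \<open>inj_on f U\<close> \<open>W \<subseteq> U\<close> \<open>\<tau> ` W \<subseteq> U\<close> by (auto dest: inj_onD)
  with \<open>open W\<close> \<open>a \<in> W\<close> show thesis by (rule that)
qed

lemma neg_id_fixed_point_isolated:
  assumes atlas: "translation_atlas S A" and \<eta>: "affine_aut_with S A \<eta> (- mat 1)"
    and a: "a \<notin> S" "\<eta> a = a"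
  obtains W where "open W" "a \<in> W" "\<And>y. y \<in> W \<Longrightarrow> \<eta> y = y \<Longrightarrow> y = a"
proof -
  obtain U f W where "(U,f) \<in> A" "inj_on f U" "open W" "a \<in> W" "W \<subseteq> U" "\<eta> ` W \<subseteq> U"
    and eq: "\<And>y. y \<in> W \<Longrightarrow> f (\<eta> y) - f a = mat_app (- mat 1) (f y - f a)"
    using affine_aut_fixed_point_chart[OF atlas \<eta> a] by blast
  have "y = a" if "y \<in> W" "\<eta> y = y" for y
    using eq[OF that(1)] that \<open>inj_on f U\<close> \<open>W \<subseteq> U\<close> \<open>a \<in> W\<close> by (auto dest: inj_onD)
  with \<open>open W\<close> \<open>a \<in> W\<close> show thesis by (rule that)
qed

lemma translation_fixes_connected:
  fixes \<tau> :: "'a::t2_space \<Rightarrow> 'a"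
  assumes atlas: "translation_atlas S A" and \<tau>: "affine_aut_with S A \<tau> (mat 1)"
    and P: "connected P" "P \<inter> S = {}" and a: "a \<in> P" "\<tau> a = a" and y: "y \<in> P"
  shows "\<tau> y = y"
proof (rule connected_induction_simple[OF P(1) a(1) y, of "\<lambda>x. \<tau> x = x"])
  show "\<tau> a = a" by fact
  fix c assume "c \<in> P"
  then have "c \<notin> S" using P(2) by blast
  show "\<exists>T. openin (top_of_set P) T \<and> c \<in> T \<and> (\<forall>x\<in>T. \<forall>y\<in>T. \<tau> x = x \<longrightarrow> \<tau> y = y)"
  proof (cases "\<tau> c = c")
    case True
    then obtain W where "open W" "c \<in> W" "\<And>y. y \<in> W \<Longrightarrow> \<tau> y = y"
      using translation_fixed_point_neighbourhood[OF atlas \<tau> \<open>c \<notin> S\<close>] by blast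
    then show ?thesis using \<open>c \<in> P\<close> by (intro exI[of _ "P \<inter> W"]) (auto simp: openin_open_Int)
  next
    case False
    have "open (- {x. \<tau> x = x})" using closed_fixed_points[OF \<tau>] by (simp add: open_Compl)
    then show ?thesis using False \<open>c \<in> P\<close>
      by (intro exI[of _ "P \<inter> - {x. \<tau> x = x}"]) (auto simp: openin_open_Int)
  qed
qed

lemma translation_fixed_interior_closed:
  fixes \<tau> :: "'a::t2_space \<Rightarrow> 'a"
  assumes atlas: "translation_atlas S A" and \<tau>: "affine_aut_with S A \<tau> (mat 1)"
  shows "closed (interior {x. \<tau> x = x})"
proof -
  define E where "E = interior {x. \<tau> x = x}"
  have nbhd_E: "b \<in> E" if "open W" "b \<in> W" "\<And>y. y \<in> W \<Longrightarrow> \<tau> y = y" for W b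
    using that interior_maximal[of W "{x. \<tau> x = x}"] unfolding E_def by blast
  have "closure E \<subseteq> E"
  proof
    fix b assume b: "b \<in> closure E"
    have "closure E \<subseteq> {x. \<tau> x = x}"
      using closure_mono[OF interior_subset[of "{x. \<tau> x = x}"]] closed_fixed_points[OF \<tau>]
      unfolding E_def by (simp add: closure_closed)
    then have fixed: "\<tau> b = b" using b by blast
    show "b \<in> E"
    proof (cases "b \<in> S")
      case False
      then show ?thesis using translation_fixed_point_neighbourhood[OF atlas \<tau> False fixed] nbhd_E
        by metis
    next
      case True
      obtain V \<psi> \<psi>' k r where chart: "cone_chart S A b V \<psi> \<psi>' k r"
        using cone_chart_exists[OF atlas True] by blast
      have "V \<inter> closure E \<noteq> {}" using b cone_chart_center[OF chart] by blast
      then obtain z where z: "z \<in> V" "z \<in> E"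
        using open_Int_closure_eq_empty[OF cone_chart_open[OF chart]] by blast
      show ?thesis
      proof (cases "z = b")
        case False
        have "(V - {b}) \<inter> S = {}" using cone_chart_singular[OF chart] by blast
        moreover have "\<tau> z = z" using z(2) interior_subset unfolding E_def by blast
        ultimately have "\<tau> y = y" if "y \<in> V - {b}" for y
          using translation_fixes_connected[OF atlas \<tau> cone_chart_punctured_connected[OF chart]]
            z(1) False that by blast
        then show ?thesis
          using nbhd_E[OF cone_chart_open[OF chart] cone_chart_center[OF chart]] fixed
          by blast
      qed (use z in simp)
    qed
  qed
  then show ?thesis unfolding E_def using closure_subset_eq by blast
qed

lemma translation_rigidity:
  fixes \<tau> :: "'a::t2_space \<Rightarrow> 'a"
  assumes surface: "translation_surface S A" and \<tau>: "affine_aut_with S A \<tau> (mat 1)"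
    and y0: "y0 \<notin> S" "\<tau> y0 = y0"
  shows "\<tau> x = x"
proof -
  have atlas: "translation_atlas S A" and conn: "connected (UNIV :: 'a set)"
    using surface unfolding translation_surface_def by simp_all
  define E where "E = interior {x. \<tau> x = x}"
  obtain W where "open W" "y0 \<in> W" "\<And>y. y \<in> W \<Longrightarrow> \<tau> y = y"
    using translation_fixed_point_neighbourhood[OF atlas \<tau> y0] by blast
  then have "y0 \<in> E" unfolding E_def using interior_maximal[of W "{x. \<tau> x = x}"] by blast
  moreover have "closed E" unfolding E_def by (rule translation_fixed_interior_closed[OF atlas \<tau>])
  moreover have "open E" unfolding E_def by simp
  moreover have "\<forall>T :: 'a set. open T \<and> closed T \<longrightarrow> T = {} \<or> T = UNIV"
    using conn unfolding connected_clopen by simp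
  ultimately have "E = UNIV" by blast
  then show ?thesis unfolding E_def using interior_subset by blast
qed

lemma neg_id_fixed_points_finite:
  fixes \<eta> :: "'a::t2_space \<Rightarrow> 'a"
  assumes atlas: "translation_atlas S A" and \<eta>: "affine_aut_with S A \<eta> (- mat 1)"
    and K: "compact K" "K \<inter> S = {}"
  shows "finite {q \<in> K. \<eta> q = q}"
proof -
  have "\<not> z islimpt {q. \<eta> q = q}" if "z \<in> K" for z
  proof (cases "\<eta> z = z")
    case True
    have "z \<notin> S" using that K(2) by blast
    then obtain W where "open W" "z \<in> W" "\<And>y. y \<in> W \<Longrightarrow> \<eta> y = y \<Longrightarrow> y = z"
      using neg_id_fixed_point_isolated[OF atlas \<eta> \<open>z \<notin> S\<close> True] by blast
    then show ?thesis unfolding islimpt_def by blast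
  next
    case False
    then show ?thesis using closed_fixed_points[OF \<eta>] unfolding closed_limpt by blast
  qed
  then have "finite (K \<inter> {q. \<eta> q = q})" by (rule finite_not_islimpt_in_compact[OF K(1)])
  then show ?thesis by (simp add: Int_def)
qed

section \<open>Automorphisms with derivative \<open>-Id\<close> near a cone point\<close>

context
  fixes S :: "'a::t2_space set" and A and \<eta> and s V \<psi> \<psi>' k r s2 V2 \<psi>2 \<psi>2' k2 r2
  assumes atlas: "translation_atlas S A" and \<eta>: "affine_aut_with S A \<eta> (- mat 1)"
    and chart: "cone_chart S A s V \<psi> \<psi>' k r" and chart2: "cone_chart S A s2 V2 \<psi>2 \<psi>2' k2 r2"
begin

abbreviation cone_sum :: "'a \<Rightarrow> complex" where
  "cone_sum y \<equiv> \<psi>2 (\<eta> y) ^ k2 + \<psi> y ^ k"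

text \<open>Since \<open>\<psi>\<^sup>k\<close> and \<open>\<psi>\<^sub>2\<^sup>k\<^sup>2\<close> are translation charts up to constants and \<open>D\<eta> = -Id\<close>,
  \<open>cone_sum\<close> is locally constant away from the cone point.\<close>

lemma cone_sum_locally_constant:
  assumes z: "z \<in> V" "z \<noteq> s" "\<eta> z \<in> V2"
  obtains W where "open W" "z \<in> W" "\<eta> ` W \<subseteq> V2" "\<And>y. y \<in> W \<Longrightarrow> cone_sum y = cone_sum z"
proof -
  have zS: "z \<notin> S" using cone_chart_singular[OF chart] z(1,2) by blast
  then have "\<eta> z \<notin> S" by (rule affine_aut_with_regular[OF \<eta>])
  obtain U f where U: "(U,f) \<in> A" "z \<in> U" using translation_atlas_cover[OF atlas zS] by blast
  obtain U2 g where U2: "(U2,g) \<in> A" "\<eta> z \<in> U2"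
    using translation_atlas_cover[OF atlas \<open>\<eta> z \<notin> S\<close>] by blast
  obtain W1 c1 where W1: "open W1" "z \<in> W1" "W1 \<subseteq> U \<inter> V"
    and e1: "\<And>y. y \<in> W1 \<Longrightarrow> f y = \<psi> y ^ k + c1"
    using cone_chart_local[OF chart U z(1)] by blast
  obtain W2 c2 where W2: "open W2" "\<eta> z \<in> W2" "W2 \<subseteq> U2 \<inter> V2"
    and e2: "\<And>y. y \<in> W2 \<Longrightarrow> g y = \<psi>2 y ^ k2 + c2"
    using cone_chart_local[OF chart2 U2 z(3)] by blast
  obtain W3 c3 where W3: "open W3" "z \<in> W3" "W3 \<subseteq> U" "\<eta> ` W3 \<subseteq> U2"
    and e3: "\<And>y. y \<in> W3 \<Longrightarrow> g (\<eta> y) = mat_app (- mat 1) (f y) + c3"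
    using affine_aut_with_chart[OF \<eta> U(1) U2(1) U(2) U2(2)] by blast
  define W where "W = W1 \<inter> W3 \<inter> \<eta> -` W2"
  have sum: "cone_sum y = c3 - c2 - c1" if "y \<in> W" for y
    using e1[of y] e2[of "\<eta> y"] e3[of y] that unfolding W_def by (simp add: algebra_simps)
  have "open W" unfolding W_def
    using W1(1) W3(1) open_vimage[OF W2(1) affine_aut_with_continuous[OF \<eta>]] by blast
  moreover have "z \<in> W" "\<eta> ` W \<subseteq> V2" using W1(2) W2(2,3) W3(2) unfolding W_def by auto
  ultimately show thesis by (rule that) (simp add: sum \<open>z \<in> W\<close>)
qed

lemma cone_sum_continuous:
  assumes "D \<subseteq> V \<inter> \<eta> -` V2"
  shows "continuous_on D cone_sum"
proof -
  have "continuous_on D \<psi>"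
    by (rule continuous_on_subset[OF cone_chart_continuous[OF chart]]) (use assms in auto)
  moreover have "continuous_on D (\<psi>2 \<circ> \<eta>)"
    by (rule continuous_on_compose[OF continuous_on_subset[OF affine_aut_with_continuous[OF \<eta>]]
          continuous_on_subset[OF cone_chart_continuous[OF chart2]]])
      (use assms in auto)
  ultimately show ?thesis unfolding comp_def by (intro continuous_intros)
qed

lemma cone_sum_vanishes_near_apex:
  assumes apex: "\<eta> s = s2"
  obtains \<delta> where "0 < \<delta>" "\<And>y. y \<in> V \<Longrightarrow> norm (\<psi> y) < \<delta> \<Longrightarrow> \<eta> y \<in> V2 \<and> cone_sum y = 0"
proof -
  have Q_open: "open (V \<inter> \<eta> -` V2)"
    using cone_chart_open[OF chart]
      open_vimage[OF cone_chart_open[OF chart2] affine_aut_with_continuous[OF \<eta>]]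
    by blast
  have s_Q: "s \<in> V \<inter> \<eta> -` V2"
    using cone_chart_center[OF chart] cone_chart_center[OF chart2] apex by simp
  obtain \<delta> where \<delta>: "0 < \<delta>" "\<delta> \<le> r" and D_sub: "{y \<in> V. norm (\<psi> y) < \<delta>} \<subseteq> V \<inter> \<eta> -` V2"
    using cone_chart_small_disc[OF chart Q_open s_Q] by blast
  define D where "D = {y \<in> V. norm (\<psi> y) < \<delta>}"
  have "cone_sum constant_on (D - {s})"
  proof (rule locally_constant_imp_constant)
    show "connected (D - {s})" unfolding D_def
      by (rule cone_chart_punctured_disc_connected[OF chart \<delta>(2)])
    fix z assume z: "z \<in> D - {s}"
    then have "z \<in> V" "z \<noteq> s" "\<eta> z \<in> V2" using D_sub unfolding D_def by auto
    then obtain W where "open W" "z \<in> W" "\<eta> ` W \<subseteq> V2"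
      and W: "\<And>y. y \<in> W \<Longrightarrow> cone_sum y = cone_sum z"
      using cone_sum_locally_constant[OF \<open>z \<in> V\<close> \<open>z \<noteq> s\<close> \<open>\<eta> z \<in> V2\<close>] by metis
    have "openin (top_of_set (D - {s})) ((D - {s}) \<inter> W)" using \<open>open W\<close> by (rule openin_open_Int)
    then show "\<exists>T. openin (top_of_set (D - {s})) T \<and> z \<in> T \<and> (\<forall>y\<in>T. cone_sum y = cone_sum z)"
      using z \<open>z \<in> W\<close> W by blast
  qed
  then obtain c where "\<And>y. y \<in> D - {s} \<Longrightarrow> cone_sum y = c" unfolding constant_on_def by blast
  then have "cone_sum ` D \<subseteq> {c, cone_sum s}" by blast
  have "cone_sum constant_on D"
  proof (rule continuous_finite_range_constant)
    show "connected D" unfolding D_def by (rule cone_chart_disc_connected[OF chart \<delta>(2)])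
    show "continuous_on D cone_sum" unfolding D_def by (rule cone_sum_continuous[OF D_sub])
    show "finite (cone_sum ` D)" using \<open>cone_sum ` D \<subseteq> {c, cone_sum s}\<close> by (rule finite_subset) simp
  qed
  moreover have "s \<in> D" unfolding D_def
    using cone_chart_center[OF chart] cone_chart_center_zero[OF chart] \<delta>(1) by simp
  moreover have "cone_sum s = 0"
    using apex cone_chart_center_zero[OF chart] cone_chart_center_zero[OF chart2]
      cone_chart_order[OF chart] cone_chart_order[OF chart2] by (simp add: power_0_left)
  ultimately have zero: "cone_sum y = 0" if "y \<in> D" for y
    using that unfolding constant_on_def by metis
  show thesis by (rule that[OF \<delta>(1)]) (use zero D_sub in \<open>auto simp: D_def\<close>)
qed

lemma cone_sum_nonzero_off_chart:
  assumes \<rho>: "\<rho> < r2 ^ k2" and c: "\<eta> c \<notin> V2"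
  obtains T where "open T" "c \<in> T"
    "\<And>x. x \<in> T \<Longrightarrow> norm (\<psi> x) ^ k < \<rho> \<Longrightarrow> \<eta> x \<in> V2 \<Longrightarrow> cone_sum x \<noteq> 0"
proof -
  define K2 where "K2 = {z \<in> V2. norm (\<psi>2 z) ^ k2 \<le> \<rho>}"
  have k2: "0 < k2" using cone_chart_order[OF chart2] by simp
  have "root k2 \<rho> < root k2 (r2 ^ k2)" using k2 \<rho> by simp
  then have "root k2 \<rho> < r2"
    using k2 cone_chart_radius[OF chart2] by (simp add: real_root_power_cancel)
  moreover have "K2 = {z \<in> V2. norm (\<psi>2 z) \<le> root k2 \<rho>}"
    unfolding K2_def by (simp add: power_le_iff_le_root[OF k2 norm_ge_zero] del: norm_power)
  ultimately have "closed K2"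
    using cone_chart_closed_disc_compact[OF chart2] by (simp add: compact_imp_closed)
  then have "open (\<eta> -` (- K2))"
    by (intro open_vimage affine_aut_with_continuous[OF \<eta>]) (simp add: open_Compl)
  moreover have "c \<in> \<eta> -` (- K2)" using c unfolding K2_def by simp
  moreover have "cone_sum x \<noteq> 0" if "x \<in> \<eta> -` (- K2)" "norm (\<psi> x) ^ k < \<rho>" "\<eta> x \<in> V2" for x
  proof
    assume "cone_sum x = 0"
    then have "norm (\<psi>2 (\<eta> x)) ^ k2 = norm (\<psi> x) ^ k"
      by (metis add_eq_0_iff norm_minus_cancel norm_power)
    then show False using that unfolding K2_def by simp
  qed
  ultimately show thesis by (rule that)
qed

lemma cone_sum_zero_locally_decided:
  assumes apex: "\<eta> s = s2" and \<rho>: "\<rho> < r2 ^ k2" and c: "c \<in> V"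
  obtains T where "open T" "c \<in> T"
    "\<And>x y. x \<in> T \<Longrightarrow> y \<in> T \<Longrightarrow> norm (\<psi> x) ^ k < \<rho> \<Longrightarrow> norm (\<psi> y) ^ k < \<rho> \<Longrightarrow>
      \<eta> x \<in> V2 \<and> cone_sum x = 0 \<Longrightarrow> \<eta> y \<in> V2 \<and> cone_sum y = 0"
proof (cases "c = s")
  case True
  obtain \<delta> where "0 < \<delta>" and \<delta>: "\<And>y. y \<in> V \<Longrightarrow> norm (\<psi> y) < \<delta> \<Longrightarrow> \<eta> y \<in> V2 \<and> cone_sum y = 0"
    using cone_sum_vanishes_near_apex[OF apex] by metis
  have c_disc: "c \<in> {y \<in> V. norm (\<psi> y) < \<delta>}"
    using c True cone_chart_center_zero[OF chart] \<open>0 < \<delta>\<close> by simp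
  show thesis by (rule that[OF cone_chart_disc_open[OF chart] c_disc]) (use \<delta> in blast)
next
  case False
  show thesis
  proof (cases "\<eta> c \<in> V2")
    case True
    obtain W where "open W" "c \<in> W" "\<eta> ` W \<subseteq> V2" and W: "\<And>y. y \<in> W \<Longrightarrow> cone_sum y = cone_sum c"
      using cone_sum_locally_constant[OF c False True] by metis
    show thesis by (rule that[OF \<open>open W\<close> \<open>c \<in> W\<close>]) (use W \<open>\<eta> ` W \<subseteq> V2\<close> in auto)
  next
    case False
    obtain T where "open T" "c \<in> T"
      and T: "\<And>x. x \<in> T \<Longrightarrow> norm (\<psi> x) ^ k < \<rho> \<Longrightarrow> \<eta> x \<in> V2 \<Longrightarrow> cone_sum x \<noteq> 0"
      using cone_sum_nonzero_off_chart[OF \<rho> False] by metis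
    show thesis by (rule that[OF \<open>open T\<close> \<open>c \<in> T\<close>]) (use T in blast)
  qed
qed

text \<open>The set where \<open>cone_sum\<close> vanishes inside the chart at \<open>s\<^sub>2\<close> contains \<open>s\<close> and is open and
  closed in the connected disc \<open>\<bar>\<psi>\<bar>\<^sup>k < \<rho>\<close>.\<close>

lemma cone_chart_neg_id:
  assumes apex: "\<eta> s = s2" and \<rho>: "\<rho> < r ^ k" "\<rho> < r2 ^ k2"
    and y: "y \<in> V" "norm (\<psi> y) ^ k < \<rho>"
  shows "\<eta> y \<in> V2 \<and> \<psi>2 (\<eta> y) ^ k2 = - (\<psi> y ^ k)"
proof -
  define N where "N = {y \<in> V. norm (\<psi> y) ^ k < \<rho>}"
  have k: "0 < k" using cone_chart_order[OF chart] by simp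
  have "root k \<rho> < root k (r ^ k)" using k \<rho>(1) by simp
  then have "root k \<rho> < r" using k cone_chart_radius[OF chart] by (simp add: real_root_power_cancel)
  moreover have "N = {y \<in> V. norm (\<psi> y) < root k \<rho>}"
    unfolding N_def by (simp add: power_less_iff_less_root[OF k norm_ge_zero] del: norm_power)
  ultimately have "connected N" using cone_chart_disc_connected[OF chart] by simp
  have "0 < \<rho>" using y(2) by (meson norm_ge_zero zero_le_power le_less_trans)
  then have "s \<in> N" unfolding N_def
    using cone_chart_center[OF chart] cone_chart_center_zero[OF chart] k by (simp add: power_0_left)
  have "\<eta> y \<in> V2 \<and> cone_sum y = 0"
  proof (rule connected_induction_simple[OF \<open>connected N\<close> \<open>s \<in> N\<close>,
        where P = "\<lambda>x. \<eta> x \<in> V2 \<and> cone_sum x = 0"])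
    show "y \<in> N" unfolding N_def using y by simp
    show "\<eta> s \<in> V2 \<and> cone_sum s = 0"
      using cone_sum_vanishes_near_apex[OF apex] cone_chart_center[OF chart]
        cone_chart_center_zero[OF chart] by (metis norm_zero)
    fix c assume "c \<in> N"
    then have "c \<in> V" unfolding N_def by simp
    obtain T where "open T" "c \<in> T"
      and T: "\<And>x y. x \<in> T \<Longrightarrow> y \<in> T \<Longrightarrow> norm (\<psi> x) ^ k < \<rho> \<Longrightarrow> norm (\<psi> y) ^ k < \<rho> \<Longrightarrow>
        \<eta> x \<in> V2 \<and> cone_sum x = 0 \<Longrightarrow> \<eta> y \<in> V2 \<and> cone_sum y = 0"
      using cone_sum_zero_locally_decided[OF apex \<rho>(2) \<open>c \<in> V\<close>] by blast
    show "\<exists>T. openin (top_of_set N) T \<and> c \<in> T \<and>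
        (\<forall>x\<in>T. \<forall>y\<in>T. \<eta> x \<in> V2 \<and> cone_sum x = 0 \<longrightarrow> \<eta> y \<in> V2 \<and> cone_sum y = 0)"
    proof (intro exI[of _ "N \<inter> T"] conjI)
      show "openin (top_of_set N) (N \<inter> T)" using \<open>open T\<close> by (rule openin_open_Int)
      show "c \<in> N \<inter> T" using \<open>c \<in> N\<close> \<open>c \<in> T\<close> by simp
      show "\<forall>x\<in>N \<inter> T. \<forall>z\<in>N \<inter> T. \<eta> x \<in> V2 \<and> cone_sum x = 0 \<longrightarrow> \<eta> z \<in> V2 \<and> cone_sum z = 0"
      proof (intro ballI impI)
        fix x z assume "x \<in> N \<inter> T" "z \<in> N \<inter> T" and zero: "\<eta> x \<in> V2 \<and> cone_sum x = 0"
        then show "\<eta> z \<in> V2 \<and> cone_sum z = 0"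
          using T[of x z, OF _ _ _ _ zero] unfolding N_def by simp
      qed
    qed
  qed
  then show ?thesis by (simp add: add_eq_0_iff)
qed

end

section \<open>Finiteness\<close>

lemma finite_hausdorff_separation:
  fixes S :: "'a::t2_space set"
  assumes "finite S"
  obtains Q where "\<And>s. s \<in> S \<Longrightarrow> open (Q s)" "\<And>s. s \<in> S \<Longrightarrow> s \<in> Q s"
    "\<And>s t. s \<in> S \<Longrightarrow> t \<in> S \<Longrightarrow> s \<noteq> t \<Longrightarrow> Q s \<inter> Q t = {}"
proof -
  have "\<exists>UV. fst p \<noteq> snd p \<longrightarrow> open (fst UV) \<and> open (snd UV) \<and>
      fst p \<in> fst UV \<and> snd p \<in> snd UV \<and> fst UV \<inter> snd UV = {}" for p :: "'a \<times> 'a"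
    using hausdorff[of "fst p" "snd p"] by (metis fst_conv snd_conv)
  then have "\<forall>p :: 'a \<times> 'a. \<exists>UV. fst p \<noteq> snd p \<longrightarrow> open (fst UV) \<and> open (snd UV) \<and>
      fst p \<in> fst UV \<and> snd p \<in> snd UV \<and> fst UV \<inter> snd UV = {}" by blast
  then obtain UV :: "'a \<times> 'a \<Rightarrow> 'a set \<times> 'a set"
    where UV: "\<forall>p. fst p \<noteq> snd p \<longrightarrow> open (fst (UV p)) \<and> open (snd (UV p)) \<and>
      fst p \<in> fst (UV p) \<and> snd p \<in> snd (UV p) \<and> fst (UV p) \<inter> snd (UV p) = {}"
    by (rule choice[THEN exE]) blast
  then have UV_open: "\<And>s t. s \<noteq> t \<Longrightarrow> open (fst (UV (s, t))) \<and> open (snd (UV (s, t)))"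
    and UV_mem: "\<And>s t. t \<noteq> s \<Longrightarrow> s \<in> fst (UV (s, t)) \<and> s \<in> snd (UV (t, s))"
    and UV_disj: "\<And>s t. s \<noteq> t \<Longrightarrow> fst (UV (s, t)) \<inter> snd (UV (s, t)) = {}"
    by auto
  define Q where "Q s = (\<Inter>t\<in>S - {s}. fst (UV (s, t)) \<inter> snd (UV (t, s)))" for s
  have "open (Q s)" for s unfolding Q_def using assms UV_open by (intro open_INT) auto
  moreover have "s \<in> Q s" for s unfolding Q_def using UV_mem by simp
  moreover have "Q s \<inter> Q t = {}" if "s \<in> S" "t \<in> S" "s \<noteq> t" for s t
  proof -
    have "Q s \<subseteq> fst (UV (s, t))" "Q t \<subseteq> snd (UV (s, t))" unfolding Q_def using that by auto
    then show ?thesis using UV_disj[OF that(3)] by auto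
  qed
  ultimately show thesis by (rule that[of Q]) simp_all
qed

lemma cone_chart_system:
  fixes S :: "'a::t2_space set"
  assumes atlas: "translation_atlas S A" and fin: "finite S"
  obtains V \<psi> \<psi>' k r \<rho> where "0 < \<rho>"
    "\<And>s. s \<in> S \<Longrightarrow> cone_chart S A s (V s) (\<psi> s) (\<psi>' s) (k s) (r s)"
    "\<And>s. s \<in> S \<Longrightarrow> \<rho> < r s ^ k s"
    "\<And>s t. s \<in> S \<Longrightarrow> t \<in> S \<Longrightarrow> s \<noteq> t \<Longrightarrow> V s \<inter> V t = {}"
proof -
  obtain Q where Q: "\<And>s. s \<in> S \<Longrightarrow> open (Q s)" "\<And>s. s \<in> S \<Longrightarrow> s \<in> Q s"
    "\<And>s t. s \<in> S \<Longrightarrow> t \<in> S \<Longrightarrow> s \<noteq> t \<Longrightarrow> Q s \<inter> Q t = {}"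
    using finite_hausdorff_separation[OF fin] by metis
  have "\<exists>V \<psi> \<psi>' k r. cone_chart S A s V \<psi> \<psi>' k r \<and> V \<subseteq> Q s" if s: "s \<in> S" for s
  proof -
    obtain V \<psi> \<psi>' k r where "cone_chart S A s V \<psi> \<psi>' k r"
      using cone_chart_exists[OF atlas s] by blast
    from cone_chart_restrict[OF this Q(1,2)[OF s]] show ?thesis by metis
  qed
  then obtain V \<psi> \<psi>' k r where charts: "\<And>s. s \<in> S \<Longrightarrow> cone_chart S A s (V s) (\<psi> s) (\<psi>' s) (k s) (r s)"
    and V_Q: "\<And>s. s \<in> S \<Longrightarrow> V s \<subseteq> Q s"
    by metis
  define m where "m = Min (insert 1 ((\<lambda>s. r s ^ k s) ` S))"
  have "0 < r s ^ k s" if "s \<in> S" for s using cone_chart_radius[OF charts[OF that]] by simp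
  then have "0 < m" unfolding m_def using fin by (simp add: Min_gr_iff)
  moreover have "m / 2 < r s ^ k s" if "s \<in> S" for s
  proof -
    have "m \<le> r s ^ k s" unfolding m_def using fin that by (simp add: Min_le_iff)
    then show ?thesis using \<open>0 < m\<close> by simp
  qed
  moreover have "V s \<inter> V t = {}" if "s \<in> S" "t \<in> S" "s \<noteq> t" for s t
    using V_Q[OF that(1)] V_Q[OF that(2)] Q(3)[OF that] by blast
  ultimately show thesis using charts by (intro that[of "m / 2"]) simp_all
qed

lemma affine_aut_determined_by_regular_point:
  fixes \<eta>1 :: "'a::t2_space \<Rightarrow> 'a"
  assumes surface: "translation_surface S A"
    and \<eta>1: "affine_aut_with S A \<eta>1 L" and \<eta>2: "affine_aut_with S A \<eta>2 L"
    and y: "y \<notin> S" "\<eta>1 y = \<eta>2 y"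
  shows "\<eta>1 = \<eta>2"
proof
  have atlas: "translation_atlas S A" using surface unfolding translation_surface_def by simp
  obtain \<eta>2' where homeo: "homeomorphism UNIV UNIV \<eta>2 \<eta>2'" using affine_aut_withD(1)[OF \<eta>2] ..
  obtain L' where L': "L ** L' = mat 1" "L' ** L = mat 1"
    using affine_aut_withD(3)[OF \<eta>2] unfolding invertible_def by blast
  have "affine_aut_with S A (\<eta>2' \<circ> \<eta>1) (L' ** L)"
    using affine_aut_with_comp[OF atlas \<eta>1 affine_aut_with_inverse[OF atlas \<eta>2 homeo L'(2,1)]] .
  then have \<tau>: "affine_aut_with S A (\<eta>2' \<circ> \<eta>1) (mat 1)" using L'(2) by simp
  have inv: "\<eta>2' (\<eta>2 x) = x" "\<eta>2 (\<eta>2' x) = x" for x using homeo by (simp_all add: homeomorphism_def)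
  fix x
  have "(\<eta>2' \<circ> \<eta>1) x = x" by (rule translation_rigidity[OF surface \<tau> y(1)]) (simp add: y(2) inv)
  then show "\<eta>1 x = \<eta>2 x" using inv(2)[of "\<eta>1 x"] by simp
qed

lemma neg_id_aut_image_in_roots:
  fixes S :: "'a::t2_space set"
  assumes atlas: "translation_atlas S A" and \<eta>: "affine_aut_with S A \<eta> (- mat 1)"
    and charts: "\<And>s. s \<in> S \<Longrightarrow> cone_chart S A s (V s) (\<psi> s) (\<psi>' s) (k s) (r s)"
    and \<rho>: "\<And>s. s \<in> S \<Longrightarrow> \<rho> < r s ^ k s"
    and s: "s \<in> S" and y: "y \<in> V s" "norm (\<psi> s y) ^ k s < \<rho>"
  shows "\<eta> y \<in> (\<Union>t\<in>S. \<psi>' t ` {w. w ^ k t = - (\<psi> s y ^ k s)})"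
proof -
  have t: "\<eta> s \<in> S" using affine_aut_withD(2)[OF \<eta>] s by blast
  have "\<eta> y \<in> V (\<eta> s) \<and> \<psi> (\<eta> s) (\<eta> y) ^ k (\<eta> s) = - (\<psi> s y ^ k s)"
    by (rule cone_chart_neg_id[OF atlas \<eta> charts[OF s] charts[OF t] refl \<rho>[OF s] \<rho>[OF t] y])
  then have "\<eta> y \<in> \<psi>' (\<eta> s) ` {w. w ^ k (\<eta> s) = - (\<psi> s y ^ k s)}"
    using cone_chart_inverse[OF charts[OF t]]
    by (metis (mono_tags, lifting) image_eqI mem_Collect_eq)
  then show ?thesis using t by blast
qed

lemma neg_id_auts_finite:
  fixes S :: "'a::t2_space set"
  assumes surface: "translation_surface S A"
  shows "finite {\<eta>. affine_aut_with S A \<eta> (- mat 1)}"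
proof -
  have atlas: "translation_atlas S A" and fin: "finite S" and "S \<noteq> {}"
    using surface unfolding translation_surface_def by simp_all
  obtain V \<psi> \<psi>' k r \<rho> where "0 < \<rho>"
    and charts: "\<And>s. s \<in> S \<Longrightarrow> cone_chart S A s (V s) (\<psi> s) (\<psi>' s) (k s) (r s)"
    and \<rho>: "\<And>s. s \<in> S \<Longrightarrow> \<rho> < r s ^ k s"
    using cone_chart_system[OF atlas fin] by metis
  obtain s0 where s0: "s0 \<in> S" using \<open>S \<noteq> {}\<close> by blast
  have k0: "0 < k s0" using cone_chart_order[OF charts[OF s0]] by simp
  then have "0 < root (k s0) \<rho>" using \<open>0 < \<rho>\<close> by simp
  then obtain y0 where y0: "y0 \<in> V s0" "y0 \<noteq> s0" "norm (\<psi> s0 y0) < root (k s0) \<rho>"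
    using cone_chart_punctured_disc_nonempty[OF charts[OF s0]] by blast
  then have y0_disc: "norm (\<psi> s0 y0) ^ k s0 < \<rho>"
    by (simp add: power_less_iff_less_root[OF k0 norm_ge_zero] del: norm_power)
  have "y0 \<notin> S" using y0(1,2) cone_chart_singular[OF charts[OF s0]] by blast
  define c0 where "c0 = - (\<psi> s0 y0 ^ k s0)"
  define Negs where "Negs = {\<eta>. affine_aut_with S A \<eta> (- mat 1)}"
  have "(\<lambda>\<eta>. \<eta> y0) ` Negs \<subseteq> (\<Union>t\<in>S. \<psi>' t ` {w. w ^ k t = c0})"
    using neg_id_aut_image_in_roots[OF atlas _ charts \<rho> s0 y0(1) y0_disc] unfolding Negs_def c0_def
    by blast
  moreover have "finite (\<Union>t\<in>S. \<psi>' t ` {w. w ^ k t = c0})"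
    using fin cone_chart_order[OF charts]
    by (intro finite_UN_I finite_imageI finite_nth_roots) (auto simp: Suc_le_eq)
  ultimately have "finite ((\<lambda>\<eta>. \<eta> y0) ` Negs)" by (rule finite_subset)
  moreover have "inj_on (\<lambda>\<eta>. \<eta> y0) Negs"
    using affine_aut_determined_by_regular_point[OF surface _ _ \<open>y0 \<notin> S\<close>] unfolding Negs_def
    by (auto intro: inj_onI)
  ultimately show ?thesis unfolding Negs_def by (rule finite_imageD)
qed

lemma neg_id_fixed_point_near_cone_point:
  fixes S :: "'a::t2_space set"
  assumes atlas: "translation_atlas S A" and \<eta>: "affine_aut_with S A \<eta> (- mat 1)"
    and charts: "\<And>s. s \<in> S \<Longrightarrow> cone_chart S A s (V s) (\<psi> s) (\<psi>' s) (k s) (r s)"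
    and \<rho>: "\<And>s. s \<in> S \<Longrightarrow> \<rho> < r s ^ k s"
    and disjoint: "\<And>s t. s \<in> S \<Longrightarrow> t \<in> S \<Longrightarrow> s \<noteq> t \<Longrightarrow> V s \<inter> V t = {}"
    and s: "s \<in> S" and q: "q \<in> V s" "norm (\<psi> s q) ^ k s < \<rho>" "\<eta> q = q"
  shows "q = s"
proof -
  have t: "\<eta> s \<in> S" using affine_aut_withD(2)[OF \<eta>] s by blast
  have cone: "q \<in> V (\<eta> s) \<and> \<psi> (\<eta> s) q ^ k (\<eta> s) = - (\<psi> s q ^ k s)"
    using cone_chart_neg_id[OF atlas \<eta> charts[OF s] charts[OF t] refl \<rho>[OF s] \<rho>[OF t] q(1,2)] q(3)
    by simp
  then have "\<eta> s = s" using disjoint[OF t s] q(1) by blast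
  then have "\<psi> s q ^ k s = 0" using cone by simp
  then have "\<psi> s q = 0" by simp
  then show ?thesis
    using cone_chart_inverse[OF charts[OF s] q(1)] cone_chart_inverse_zero[OF charts[OF s]] by simp
qed

lemma finite_fixed_points_of_neg_id_auts:
  fixes S :: "'a::t2_space set"
  assumes surface: "translation_surface S A"
  shows "finite {q. \<exists>\<eta>. affine_aut_with S A \<eta> (- mat 1) \<and> \<eta> q = q}"
proof -
  have atlas: "translation_atlas S A" and fin: "finite S" and compact: "compact (UNIV :: 'a set)"
    using surface unfolding translation_surface_def by simp_all
  obtain V \<psi> \<psi>' k r \<rho> where "0 < \<rho>"
    and charts: "\<And>s. s \<in> S \<Longrightarrow> cone_chart S A s (V s) (\<psi> s) (\<psi>' s) (k s) (r s)"
    and \<rho>: "\<And>s. s \<in> S \<Longrightarrow> \<rho> < r s ^ k s"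
    and disjoint: "\<And>s t. s \<in> S \<Longrightarrow> t \<in> S \<Longrightarrow> s \<noteq> t \<Longrightarrow> V s \<inter> V t = {}"
    using cone_chart_system[OF atlas fin] by metis
  define N where "N = (\<Union>s\<in>S. {y \<in> V s. norm (\<psi> s y) ^ k s < \<rho>})"
  define Negs where "Negs = {\<eta>. affine_aut_with S A \<eta> (- mat 1)}"
  have "open N" unfolding N_def using cone_chart_power_disc_open[OF charts] by blast
  have "S \<subseteq> N" unfolding N_def using cone_chart_center[OF charts] cone_chart_center_zero[OF charts]
      cone_chart_order[OF charts] \<open>0 < \<rho>\<close> by (force simp: power_0_left)
  have "{q. \<exists>\<eta>. affine_aut_with S A \<eta> (- mat 1) \<and> \<eta> q = q} \<subseteq> S \<union> (\<Union>\<eta>\<in>Negs. {q \<in> - N. \<eta> q = q})"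
  proof
    fix q assume "q \<in> {q. \<exists>\<eta>. affine_aut_with S A \<eta> (- mat 1) \<and> \<eta> q = q}"
    then obtain \<eta> where \<eta>: "affine_aut_with S A \<eta> (- mat 1)" and "\<eta> q = q" by blast
    show "q \<in> S \<union> (\<Union>\<eta>\<in>Negs. {q \<in> - N. \<eta> q = q})"
    proof (cases "q \<in> S")
      case False
      then have "q \<notin> N"
        using neg_id_fixed_point_near_cone_point[OF atlas \<eta> charts \<rho> disjoint] \<open>\<eta> q = q\<close>
        unfolding N_def by blast
      then show ?thesis using \<eta> \<open>\<eta> q = q\<close> unfolding Negs_def by blast
    qed simp
  qed
  moreover have "finite (S \<union> (\<Union>\<eta>\<in>Negs. {q \<in> - N. \<eta> q = q}))"
    using fin neg_id_auts_finite[OF surface]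
      neg_id_fixed_points_finite[OF atlas _ compact_Int_closed[OF compact, of "- N"]]
      \<open>open N\<close> \<open>S \<subseteq> N\<close>
    unfolding Negs_def by (auto simp: closed_Compl)
  ultimately show ?thesis by (rule finite_subset)
qed

theorem lemma4p5:
  fixes S :: "'a::t2_space set" and A :: "('a set \<times> ('a \<Rightarrow> complex)) set"
    and \<phi> :: "'a \<Rightarrow> 'a" and p :: 'a
  assumes "lattice_surface S A"
    and "affine_aut_with S A \<phi> (- mat 1)"
    and "\<phi> p = p"
  shows "periodic_point S A p"
proof -
  have surface: "translation_surface S A" using assms(1) unfolding lattice_surface_def by simp
  then have atlas: "translation_atlas S A" unfolding translation_surface_def by simp
  have "g p \<in> {q. \<exists>\<eta>. affine_aut_with S A \<eta> (- mat 1) \<and> \<eta> q = q}" if g: "g \<in> Aff S A" for g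
  proof -
    obtain L where "affine_aut_with S A g L" using g unfolding Aff_def by blast
    then obtain \<eta> where "affine_aut_with S A \<eta> (- mat 1)" "\<And>x. \<eta> (g x) = g (\<phi> x)"
      using affine_aut_with_conj_neg_id[OF atlas assms(2)] by metis
    then show ?thesis using assms(3) by auto
  qed
  then have "{g p |g. g \<in> Aff S A} \<subseteq> {q. \<exists>\<eta>. affine_aut_with S A \<eta> (- mat 1) \<and> \<eta> q = q}" by blast
  then show ?thesis
    unfolding periodic_point_def
    by (rule finite_subset[OF _ finite_fixed_points_of_neg_id_auts[OF surface]])
qed

end
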